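(* Let $G$ be a connected graph and $U\subseteq V(G)$ such that every $U$-rooted minor of $G$ with countable branch sets has countable colouring number. Then every branch of a slim $U$-rooted normal semi-partition tree $(T,\mathcal V)$ of $G$ is at most countable; in particular, all bags $V_t$ are countable.
   Context: Minors are given by disjoint connected branch sets; a minor is $U$-rooted if every branch set meets $U$. Countable colouring number: a well-order of the vertices in which each vertex is preceded by only finitely many neighbours. An order tree is a poset with unique minimal element in which every down-closure $\lceil t\rceil$ is well-ordered; a branch is a maximal chain; $\mathring{\lceil t\rceil}=\lceil t\rceil\setminus\{t\}$; height of $t$ = order type of $\mathring{\lceil t\rceil}$. A $T$-graph is a graph on $T$ whose edges have comparable endvertices and in which the lower neighbours of each $t$ are cofinal in $\mathring{\lceil t\rceil}$. $(T,(V_t)_{t\in T})$ with nonempty $V_t\subseteq V(G)$ is a normal semi-partition tree if the $V_t$ are pairwise disjoint, each $G[V_t]$ connected, contracting each $V_t$ in $G[\bigcup V_t]$ gives a $T$-graph, and for every path in $G$ with at least one edge, endvertices in $V_t$, $V_{t'}$, inner vertices outside $\bigcup V_s$ and no edges inside $G[\bigcup V_s]$, $t,t'$ are comparable. Slim: $|V_t|\le|\mathrm{height}(t)|+\aleph_0$; $U$-rooted: each $V_t$ meets $U$. *)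

theory Defs
  imports Main "HOL-Library.Countable_Set"
begin

definition graph :: "'v set \<Rightarrow> ('v \<Rightarrow> 'v \<Rightarrow> bool) \<Rightarrow> bool" where
  "graph V E \<longleftrightarrow> (\<forall>x y. E x y \<longrightarrow> x \<in> V \<and> y \<in> V \<and> x \<noteq> y \<and> E y x)"

definition walk :: "('v \<Rightarrow> 'v \<Rightarrow> bool) \<Rightarrow> 'v list \<Rightarrow> bool" where
  "walk E xs \<longleftrightarrow> xs \<noteq> [] \<and> (\<forall>i. Suc i < length xs \<longrightarrow> E (xs ! i) (xs ! Suc i))"

definition gpath :: "('v \<Rightarrow> 'v \<Rightarrow> bool) \<Rightarrow> 'v list \<Rightarrow> bool" where
  "gpath E xs \<longleftrightarrow> walk E xs \<and> distinct xs"

definition connected_set :: "('v \<Rightarrow> 'v \<Rightarrow> bool) \<Rightarrow> 'v set \<Rightarrow> bool" where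
  "connected_set E S \<longleftrightarrow> S \<noteq> {} \<and>
     (\<forall>x\<in>S. \<forall>y\<in>S. \<exists>xs. walk E xs \<and> hd xs = x \<and> last xs = y \<and> set xs \<subseteq> S)"

definition connected_graph :: "'v set \<Rightarrow> ('v \<Rightarrow> 'v \<Rightarrow> bool) \<Rightarrow> bool" where
  "connected_graph V E \<longleftrightarrow> graph V E \<and> connected_set E V"

text \<open>The minor's vertices are
  (w.l.o.g.) its branch sets themselves: B is a set of pairwise disjoint, nonempty,
  connected, countable subsets of V, each meeting U, and F is a graph on B such that
  adjacent branch sets are joined by an edge of G.\<close>
definition rooted_countable_minor ::
  "'v set \<Rightarrow> ('v \<Rightarrow> 'v \<Rightarrow> bool) \<Rightarrow> 'v set \<Rightarrow> 'v set set \<Rightarrow> ('v set \<Rightarrow> 'v set \<Rightarrow> bool) \<Rightarrow> bool" where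
  "rooted_countable_minor V E U B F \<longleftrightarrow>
     graph B F \<and>
     (\<forall>X\<in>B. X \<subseteq> V \<and> connected_set E X \<and> countable X \<and> X \<inter> U \<noteq> {}) \<and>
     (\<forall>X\<in>B. \<forall>Y\<in>B. X \<noteq> Y \<longrightarrow> X \<inter> Y = {}) \<and>
     (\<forall>X Y. F X Y \<longrightarrow> (\<exists>x\<in>X. \<exists>y\<in>Y. E x y))"

definition countable_colouring_number :: "'a set \<Rightarrow> ('a \<Rightarrow> 'a \<Rightarrow> bool) \<Rightarrow> bool" where
  "countable_colouring_number V E \<longleftrightarrow>
     (\<exists>r. well_order_on V r \<and>
          (\<forall>x\<in>V. finite {y. (y, x) \<in> r \<and> y \<noteq> x \<and> E x y}))"

definition down :: "'t set \<Rightarrow> ('t \<Rightarrow> 't \<Rightarrow> bool) \<Rightarrow> 't \<Rightarrow> 't set" where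
  "down T le t = {s\<in>T. le s t}"

definition sdown :: "'t set \<Rightarrow> ('t \<Rightarrow> 't \<Rightarrow> bool) \<Rightarrow> 't \<Rightarrow> 't set" where
  "sdown T le t = {s\<in>T. le s t \<and> s \<noteq> t}"

definition order_tree :: "'t set \<Rightarrow> ('t \<Rightarrow> 't \<Rightarrow> bool) \<Rightarrow> bool" where
  "order_tree T le \<longleftrightarrow>
     (\<forall>x\<in>T. le x x) \<and>
     (\<forall>x\<in>T. \<forall>y\<in>T. le x y \<and> le y x \<longrightarrow> x = y) \<and>
     (\<forall>x\<in>T. \<forall>y\<in>T. \<forall>z\<in>T. le x y \<and> le y z \<longrightarrow> le x z) \<and>
     (\<exists>!r. r \<in> T \<and> (\<forall>s\<in>T. le s r \<longrightarrow> s = r)) \<and>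
     (\<forall>t\<in>T. (\<forall>x\<in>down T le t. \<forall>y\<in>down T le t. le x y \<or> le y x) \<and>
             (\<forall>S. S \<subseteq> down T le t \<and> S \<noteq> {} \<longrightarrow> (\<exists>m\<in>S. \<forall>s\<in>S. le m s)))"

definition chain_in :: "'t set \<Rightarrow> ('t \<Rightarrow> 't \<Rightarrow> bool) \<Rightarrow> 't set \<Rightarrow> bool" where
  "chain_in T le C \<longleftrightarrow> C \<subseteq> T \<and> (\<forall>x\<in>C. \<forall>y\<in>C. le x y \<or> le y x)"

definition branch :: "'t set \<Rightarrow> ('t \<Rightarrow> 't \<Rightarrow> bool) \<Rightarrow> 't set \<Rightarrow> bool" where
  "branch T le C \<longleftrightarrow> chain_in T le C \<and> (\<forall>D. chain_in T le D \<and> C \<subseteq> D \<longrightarrow> D = C)"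

definition T_graph :: "'t set \<Rightarrow> ('t \<Rightarrow> 't \<Rightarrow> bool) \<Rightarrow> ('t \<Rightarrow> 't \<Rightarrow> bool) \<Rightarrow> bool" where
  "T_graph T le H \<longleftrightarrow> graph T H \<and>
     (\<forall>s t. H s t \<longrightarrow> le s t \<or> le t s) \<and>
     (\<forall>t\<in>T. \<forall>s\<in>sdown T le t. \<exists>s'\<in>sdown T le t. le s s' \<and> H s' t)"

definition normal_semi_partition_tree ::
  "'v set \<Rightarrow> ('v \<Rightarrow> 'v \<Rightarrow> bool) \<Rightarrow> 't set \<Rightarrow> ('t \<Rightarrow> 't \<Rightarrow> bool) \<Rightarrow> ('t \<Rightarrow> 'v set) \<Rightarrow> bool" where
  "normal_semi_partition_tree V E T le Vt \<longleftrightarrow>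
     order_tree T le \<and>
     (\<forall>t\<in>T. Vt t \<noteq> {} \<and> Vt t \<subseteq> V) \<and>
     (\<forall>t\<in>T. \<forall>t'\<in>T. t \<noteq> t' \<longrightarrow> Vt t \<inter> Vt t' = {}) \<and>
     (\<forall>t\<in>T. connected_set E (Vt t)) \<and>
     T_graph T le (\<lambda>t t'. t \<in> T \<and> t' \<in> T \<and> t \<noteq> t' \<and> (\<exists>x\<in>Vt t. \<exists>y\<in>Vt t'. E x y)) \<and>
     (\<forall>t\<in>T. \<forall>t'\<in>T. \<forall>xs.
        gpath E xs \<and> length xs \<ge> 2 \<and> hd xs \<in> Vt t \<and> last xs \<in> Vt t' \<and>
        set (butlast (tl xs)) \<inter> (\<Union>s\<in>T. Vt s) = {} \<and>
        (\<forall>i. Suc i < length xs \<longrightarrow>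
             \<not> (xs ! i \<in> (\<Union>s\<in>T. Vt s) \<and> xs ! Suc i \<in> (\<Union>s\<in>T. Vt s)))
        \<longrightarrow> le t t' \<or> le t' t)"

text \<open>Slim: |V_t| \<le> |height(t)| + aleph_0, where |height(t)| is the cardinality of the
  strict down-closure; the cardinal sum is realised as a disjoint union with nat.\<close>
definition slim :: "'t set \<Rightarrow> ('t \<Rightarrow> 't \<Rightarrow> bool) \<Rightarrow> ('t \<Rightarrow> 'v set) \<Rightarrow> bool" where
  "slim T le Vt \<longleftrightarrow>
     (\<forall>t\<in>T. (card_of (Vt t), card_of (sdown T le t <+> (UNIV :: nat set))) \<in> ordLeq)"

definition U_rooted_tree :: "'v set \<Rightarrow> 't set \<Rightarrow> ('t \<Rightarrow> 'v set) \<Rightarrow> bool" where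
  "U_rooted_tree U T Vt \<longleftrightarrow> (\<forall>t\<in>T. Vt t \<inter> U \<noteq> {})"

end

(* Let C be a down-closed chain of the tree: a branch, or the down-closure of a node.  If C
   were uncountable, its points of countable height would form a copy D of omega_1.  By
   slimness the bags of D are countable, so contracting them yields a U-rooted minor with
   countable branch sets, and hence a total order of D in which every point has only finitely
   many earlier neighbours.  By normality the lower neighbours of every point of D are cofinal
   below it, and such a graph on omega_1 admits no such order: close countable initial
   segments under adding earlier neighbours.  The supremum t of an omega-sequence of these
   closures has infinitely many lower neighbours, so t is an earlier neighbour of one of them
   and would already lie in one of the closures. *)

theory Submission
  imports Defs "HOL-Library.Countable_Set_Type"
begin

section \<open>Orders of type \<open>\<omega>\<^sub>1\<close>\<close>

locale omega1_order =
  fixes D :: "'a set" and le :: "'a \<Rightarrow> 'a \<Rightarrow> bool"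
  assumes antisym: "x \<in> D \<Longrightarrow> y \<in> D \<Longrightarrow> le x y \<Longrightarrow> le y x \<Longrightarrow> x = y"
    and trans: "x \<in> D \<Longrightarrow> y \<in> D \<Longrightarrow> z \<in> D \<Longrightarrow> le x y \<Longrightarrow> le y z \<Longrightarrow> le x z"
    and total: "x \<in> D \<Longrightarrow> y \<in> D \<Longrightarrow> le x y \<or> le y x"
    and has_least: "S \<subseteq> D \<Longrightarrow> S \<noteq> {} \<Longrightarrow> \<exists>m\<in>S. \<forall>s\<in>S. le m s"
    and countable_initial_segment: "t \<in> D \<Longrightarrow> countable {s\<in>D. le s t}"
    and uncountable: "\<not> countable D"
begin

lemma refl: "x \<in> D \<Longrightarrow> le x x"
  using total by blast

lemma countable_has_strict_upper_bound:
  assumes "S \<subseteq> D" "countable S"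
  shows "\<exists>u\<in>D. \<forall>s\<in>S. le s u \<and> s \<noteq> u"
proof -
  have "countable (\<Union>s\<in>S. {x\<in>D. le x s})"
    using assms countable_initial_segment by auto
  then have "\<not> D \<subseteq> (\<Union>s\<in>S. {x\<in>D. le x s})"
    using uncountable countable_subset by blast
  then obtain u where "u \<in> D" "\<forall>s\<in>S. \<not> le u s"
    by blast
  then show ?thesis
    using assms(1) total refl by blast
qed

lemma countable_has_supremum:
  assumes "S \<subseteq> D" "countable S"
  shows "\<exists>u\<in>D. \<forall>s\<in>D. (le s u \<and> s \<noteq> u) \<longleftrightarrow> (\<exists>x\<in>S. le s x)"
proof -
  define bounds where "bounds = {u\<in>D. \<forall>x\<in>S. le x u \<and> x \<noteq> u}"
  have "bounds \<noteq> {}"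
    using countable_has_strict_upper_bound[OF assms] by (auto simp: bounds_def)
  then obtain u where u: "u \<in> bounds" and least: "\<forall>v\<in>bounds. le u v"
    using has_least[of bounds] by (auto simp: bounds_def)
  have "(le s u \<and> s \<noteq> u) \<longleftrightarrow> (\<exists>x\<in>S. le s x)" if "s \<in> D" for s
  proof
    assume "le s u \<and> s \<noteq> u"
    show "\<exists>x\<in>S. le s x"
    proof (rule ccontr)
      assume "\<not> (\<exists>x\<in>S. le s x)"
      then have "s \<in> bounds"
        using that assms(1) total by (auto simp: bounds_def)
      then show False
        using least \<open>le s u \<and> s \<noteq> u\<close> antisym that u by (auto simp: bounds_def)
    qed
  next
    assume "\<exists>x\<in>S. le s x"
    then obtain x where x: "x \<in> S" "le s x"
      by blast
    with u have "le x u" "x \<noteq> u" "x \<in> D" "u \<in> D"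
      using assms(1) by (auto simp: bounds_def)
    with x that show "le s u \<and> s \<noteq> u"
      using trans antisym by metis
  qed
  then show ?thesis
    using u by (auto simp: bounds_def)
qed

lemma finite_set_has_common_bound:
  assumes "finite F" "F \<subseteq> D" "X \<subseteq> D" "X \<noteq> {}" "\<forall>s\<in>F. \<exists>x\<in>X. le s x"
  shows "\<exists>x\<in>X. \<forall>s\<in>F. le s x"
  using assms
proof (induction F rule: finite_induct)
  case empty
  then show ?case by blast
next
  case (insert s F)
  then obtain x y where x: "x \<in> X" "\<forall>s'\<in>F. le s' x" and y: "y \<in> X" "le s y"
    by auto
  have "s \<in> D" "F \<subseteq> D" "x \<in> D" "y \<in> D"
    using insert.prems x y by auto
  then consider "le x y" | "le y x"
    using total by blast
  then show ?case
  proof cases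
    case 1
    then have "\<forall>s'\<in>F. le s' y"
      using x(2) trans[of _ x y] \<open>F \<subseteq> D\<close> \<open>x \<in> D\<close> \<open>y \<in> D\<close> by blast
    then show ?thesis
      using y by blast
  next
    case 2
    then have "le s x"
      using y(2) trans[of s y x] \<open>s \<in> D\<close> \<open>x \<in> D\<close> \<open>y \<in> D\<close> by blast
    then show ?thesis
      using x by blast
  qed
qed

lemma sequence_strictly_above_closures:
  assumes "\<And>t. t \<in> D \<Longrightarrow> cl t \<subseteq> D \<and> countable (cl t)"
  obtains seq where "\<And>n. seq n \<in> D"
    and "\<And>n s. s \<in> cl (seq n) \<Longrightarrow> le s (seq (Suc n)) \<and> s \<noteq> seq (Suc n)"
proof -
  obtain next_bound where next_bound: "\<And>S. S \<subseteq> D \<Longrightarrow> countable S \<Longrightarrow>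
      next_bound S \<in> D \<and> (\<forall>s\<in>S. le s (next_bound S) \<and> s \<noteq> next_bound S)"
    using countable_has_strict_upper_bound by metis
  obtain t0 where "t0 \<in> D"
    using uncountable by fastforce
  define seq where "seq = rec_nat t0 (\<lambda>_ t. next_bound (cl t))"
  have seq_D: "seq n \<in> D" for n
    by (induction n) (use \<open>t0 \<in> D\<close> next_bound assms in \<open>auto simp: seq_def\<close>)
  show thesis
  proof (rule that[OF seq_D])
    show "le s (seq (Suc n)) \<and> s \<noteq> seq (Suc n)" if "s \<in> cl (seq n)" for n s
      using next_bound assms[OF seq_D[of n]] that by (simp add: seq_def)
  qed
qed

lemma supremum_of_sequence_has_infinitely_many_lower_neighbours:
  assumes cofinal: "\<And>s t. s \<in> D \<Longrightarrow> t \<in> D \<Longrightarrow> le s t \<Longrightarrow> s \<noteq> t \<Longrightarrow>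
      \<exists>s'\<in>D. le s s' \<and> le s' t \<and> s' \<noteq> t \<and> G s' t"
    and seq_D: "\<And>n. seq n \<in> D"
    and seq_less: "\<And>n. le (seq n) (seq (Suc n)) \<and> seq n \<noteq> seq (Suc n)"
    and "t \<in> D" and sup: "\<And>s. s \<in> D \<Longrightarrow> (le s t \<and> s \<noteq> t) \<longleftrightarrow> (\<exists>n. le s (seq n))"
  shows "infinite {s\<in>D. le s t \<and> s \<noteq> t \<and> G s t}"
proof
  assume "finite {s\<in>D. le s t \<and> s \<noteq> t \<and> G s t}"
  moreover have "\<forall>s\<in>{s\<in>D. le s t \<and> s \<noteq> t \<and> G s t}. \<exists>x\<in>range seq. le s x"
    using sup by auto
  ultimately have "\<exists>x\<in>range seq. \<forall>s\<in>{s\<in>D. le s t \<and> s \<noteq> t \<and> G s t}. le s x"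
    using finite_set_has_common_bound[of _ "range seq"] seq_D by blast
  then obtain k where k: "\<And>s. s \<in> D \<Longrightarrow> le s t \<Longrightarrow> s \<noteq> t \<Longrightarrow> G s t \<Longrightarrow> le s (seq k)"
    by auto
  have "le (seq (Suc k)) t" "seq (Suc k) \<noteq> t"
    using sup[OF seq_D] refl[OF seq_D] by blast+
  then obtain s where s: "s \<in> D" "le (seq (Suc k)) s" "le s t" "s \<noteq> t" "G s t"
    using cofinal[OF seq_D \<open>t \<in> D\<close>] by blast
  then have "le (seq (Suc k)) (seq k)"
    using k trans[OF seq_D s(1) seq_D] by blast
  then show False
    using seq_less[of k] antisym[OF seq_D seq_D] by blast
qed

theorem no_total_order_with_finitely_many_earlier_neighbours:
  assumes cofinal: "\<And>s t. s \<in> D \<Longrightarrow> t \<in> D \<Longrightarrow> le s t \<Longrightarrow> s \<noteq> t \<Longrightarrow>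
      \<exists>s'\<in>D. le s s' \<and> le s' t \<and> s' \<noteq> t \<and> G s' t"
    and G_sym: "\<And>s t. s \<in> D \<Longrightarrow> t \<in> D \<Longrightarrow> G s t \<Longrightarrow> G t s"
    and Q_total: "\<And>s t. s \<in> D \<Longrightarrow> t \<in> D \<Longrightarrow> s \<noteq> t \<Longrightarrow> Q s t \<or> Q t s"
    and finite_earlier: "\<And>t. t \<in> D \<Longrightarrow> finite {s\<in>D. Q s t \<and> s \<noteq> t \<and> G t s}"
  shows False
proof -
  define earlier where "earlier t = {s\<in>D. Q s t \<and> s \<noteq> t \<and> G t s}" for t
  define closure where "closure t = (\<Union>s\<in>{s\<in>D. le s t}. insert s (earlier s))" for t
  have "closure t \<subseteq> D \<and> countable (closure t)" if "t \<in> D" for t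
    using that countable_initial_segment finite_earlier
    by (auto simp: closure_def earlier_def intro: countable_finite)
  then obtain seq where seq_D: "\<And>n. seq n \<in> D"
    and seq_step: "\<And>n s. s \<in> closure (seq n) \<Longrightarrow> le s (seq (Suc n)) \<and> s \<noteq> seq (Suc n)"
    using sequence_strictly_above_closures by metis
  have "seq n \<in> closure (seq n)" for n
    using seq_D refl by (auto simp: closure_def)
  then have seq_less: "le (seq n) (seq (Suc n)) \<and> seq n \<noteq> seq (Suc n)" for n
    using seq_step by blast
  obtain t where "t \<in> D" and sup: "\<And>s. s \<in> D \<Longrightarrow> (le s t \<and> s \<noteq> t) \<longleftrightarrow> (\<exists>n. le s (seq n))"
    using countable_has_supremum[of "range seq"] seq_D by (auto simp: image_subset_iff)
  have "infinite {s\<in>D. le s t \<and> s \<noteq> t \<and> G s t}"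
    using supremum_of_sequence_has_infinitely_many_lower_neighbours[OF cofinal seq_D seq_less
        \<open>t \<in> D\<close> sup] .
  moreover have "finite (earlier t)"
    using finite_earlier \<open>t \<in> D\<close> by (simp add: earlier_def)
  ultimately have "\<not> {s\<in>D. le s t \<and> s \<noteq> t \<and> G s t} \<subseteq> earlier t"
    using finite_subset by blast
  then obtain s where s: "s \<in> D" "le s t" "s \<noteq> t" "G s t" "s \<notin> earlier t"
    by blast
  then have "t \<in> earlier s"
    using Q_total G_sym \<open>t \<in> D\<close> by (auto simp: earlier_def)
  moreover obtain n where "le s (seq n)"
    using sup s by blast
  ultimately have "le t (seq (Suc n)) \<and> t \<noteq> seq (Suc n)"
    using seq_step[of t n] s(1) by (auto simp: closure_def)
  moreover have "le (seq (Suc n)) t"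
    using sup[OF seq_D] refl[OF seq_D] by blast
  ultimately show False
    using antisym[OF \<open>t \<in> D\<close> seq_D] by blast
qed

end

section \<open>Chains in order trees\<close>

lemma order_tree_refl:
  assumes "order_tree T le" "x \<in> T"
  shows "le x x"
  using assms(1)[unfolded order_tree_def, THEN conjunct1] assms(2)
  by blast

lemma order_tree_antisym:
  assumes "order_tree T le" "x \<in> T" "y \<in> T" "le x y" "le y x"
  shows "x = y"
  using assms(1)[unfolded order_tree_def, THEN conjunct2, THEN conjunct1] assms(2-)
  by blast

lemma order_tree_trans:
  assumes "order_tree T le" "x \<in> T" "y \<in> T" "z \<in> T" "le x y" "le y z"
  shows "le x z"
  using assms(1)[unfolded order_tree_def, THEN conjunct2, THEN conjunct2, THEN conjunct1] assms(2-)
  by blast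

lemma order_tree_down:
  assumes "order_tree T le" "t \<in> T"
  shows order_tree_down_total: "\<And>x y. x \<in> down T le t \<Longrightarrow> y \<in> down T le t \<Longrightarrow> le x y \<or> le y x"
    and order_tree_down_has_least: "\<And>S. S \<subseteq> down T le t \<Longrightarrow> S \<noteq> {} \<Longrightarrow> \<exists>m\<in>S. \<forall>s\<in>S. le m s"
  using assms(1)[unfolded order_tree_def, THEN conjunct2, THEN conjunct2, THEN conjunct2,
      THEN conjunct2, rule_format, OF assms(2)]
  by blast+

lemma chain_has_least:
  assumes tree: "order_tree T le" and chain: "chain_in T le C" and "S \<subseteq> C" "S \<noteq> {}"
  shows "\<exists>m\<in>S. \<forall>s\<in>S. le m s"
proof -
  obtain x where x: "x \<in> S"
    using \<open>S \<noteq> {}\<close> by blast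
  have x_T: "x \<in> T" and S_T: "S \<subseteq> T"
    using x \<open>S \<subseteq> C\<close> chain by (auto simp: chain_in_def)
  have "S \<inter> down T le x \<subseteq> down T le x" "S \<inter> down T le x \<noteq> {}"
    using x x_T order_tree_refl[OF tree] by (auto simp: down_def)
  then obtain m where m_least: "m \<in> S \<inter> down T le x" "\<forall>s\<in>S \<inter> down T le x. le m s"
    using order_tree_down_has_least[OF tree x_T] by blast
  then have m: "m \<in> S" "le m x" "\<forall>s\<in>S \<inter> down T le x. le m s"
    by (auto simp: down_def)
  have "le m s" if "s \<in> S" for s
  proof (cases "le s x")
    case True
    then show ?thesis
      using m that S_T by (auto simp: down_def)
  next
    case False
    then have "le x s"
      using chain x that \<open>S \<subseteq> C\<close> by (auto simp: chain_in_def)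
    then show ?thesis
      using order_tree_trans[OF tree] m x_T that S_T by blast
  qed
  then show ?thesis
    using m by blast
qed

definition down_closed_chain :: "'t set \<Rightarrow> ('t \<Rightarrow> 't \<Rightarrow> bool) \<Rightarrow> 't set \<Rightarrow> bool" where
  "down_closed_chain T le C \<longleftrightarrow> chain_in T le C \<and> (\<forall>x\<in>C. \<forall>s\<in>T. le s x \<longrightarrow> s \<in> C)"

lemma down_closed_chain_down:
  assumes tree: "order_tree T le" and "t \<in> T"
  shows "down_closed_chain T le (down T le t)"
  unfolding down_closed_chain_def chain_in_def
proof (intro conjI ballI impI)
  show "down T le t \<subseteq> T"
    by (auto simp: down_def)
  show "le x y \<or> le y x" if "x \<in> down T le t" "y \<in> down T le t" for x y
    using order_tree_down_total[OF assms that] .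
  show "s \<in> down T le t" if "x \<in> down T le t" "s \<in> T" "le s x" for x s
    using that order_tree_trans[OF tree, of s x t] \<open>t \<in> T\<close> by (auto simp: down_def)
qed

lemma branch_down_closed_chain:
  assumes tree: "order_tree T le" and "branch T le C"
  shows "down_closed_chain T le C"
proof -
  have chain: "chain_in T le C" and maximal: "\<And>C'. chain_in T le C' \<Longrightarrow> C \<subseteq> C' \<Longrightarrow> C' = C"
    using \<open>branch T le C\<close> by (auto simp: branch_def)
  have "s \<in> C" if "x \<in> C" "s \<in> T" "le s x" for x s
  proof -
    have x_T: "x \<in> T" and s_below: "s \<in> down T le x"
      using that chain by (auto simp: chain_in_def down_def)
    have "le s y \<or> le y s" if "y \<in> C" for y
    proof (cases "le y x")
      case True
      then have "y \<in> down T le x"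
        using \<open>y \<in> C\<close> chain by (auto simp: chain_in_def down_def)
      then show ?thesis
        using order_tree_down_total[OF tree x_T s_below] by blast
    next
      case False
      then have "le x y"
        using chain \<open>x \<in> C\<close> \<open>y \<in> C\<close> by (auto simp: chain_in_def)
      then show ?thesis
        using order_tree_trans[OF tree] \<open>s \<in> T\<close> x_T \<open>y \<in> C\<close> \<open>le s x\<close> chain
        by (meson chain_in_def subsetD)
    qed
    then have "chain_in T le (insert s C)"
      using chain \<open>s \<in> T\<close> order_tree_refl[OF tree] by (auto simp: chain_in_def)
    then show ?thesis
      using maximal by blast
  qed
  then show ?thesis
    using chain by (simp add: down_closed_chain_def)
qed

lemma down_closed_countable_part:
  assumes tree: "order_tree T le" and "down_closed_chain T le C"
    and "t \<in> C" "countable (down T le t)" "s \<in> T" "le s t"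
  shows "s \<in> C \<and> countable (down T le s)"
proof
  show "s \<in> C"
    using assms(2-) by (auto simp: down_closed_chain_def)
  have "down T le s \<subseteq> down T le t"
    using assms order_tree_trans[OF tree] by (auto simp: down_def down_closed_chain_def chain_in_def)
  then show "countable (down T le s)"
    using assms(4) by (rule countable_subset)
qed

text \<open>Otherwise the least point of \<open>C\<close> outside the countable part would have a countable
  down-closure as well.\<close>
lemma uncountable_countable_part:
  assumes tree: "order_tree T le" and C: "down_closed_chain T le C" and "\<not> countable C"
  shows "\<not> countable {t\<in>C. countable (down T le t)}"
proof
  define D where "D = {t\<in>C. countable (down T le t)}"
  assume "countable {t\<in>C. countable (down T le t)}"
  then have "countable D"
    by (simp add: D_def)
  have chain: "chain_in T le C" and C_down: "\<And>x s. x \<in> C \<Longrightarrow> s \<in> T \<Longrightarrow> le s x \<Longrightarrow> s \<in> C"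
    using C by (auto simp: down_closed_chain_def)
  have "C - D \<noteq> {}"
    using \<open>\<not> countable C\<close> \<open>countable D\<close> countable_subset[of C D] by blast
  then obtain m where m: "m \<in> C - D" "\<forall>s\<in>C - D. le m s"
    using chain_has_least[OF tree chain, of "C - D"] by blast
  have "s \<in> insert m D" if "s \<in> down T le m" for s
  proof (rule ccontr)
    assume "s \<notin> insert m D"
    moreover have "s \<in> T" "le s m"
      using that by (auto simp: down_def)
    moreover have "s \<in> C"
      using C_down m \<open>s \<in> T\<close> \<open>le s m\<close> by blast
    ultimately have "le m s" "s \<noteq> m"
      using m by auto
    then show False
      using order_tree_antisym[OF tree \<open>s \<in> T\<close> _ \<open>le s m\<close>] m chain by (auto simp: chain_in_def)
  qed
  then have "countable (down T le m)"
    using countable_subset[OF _ countable_insert[OF \<open>countable D\<close>]] by blast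
  then show False
    using m by (simp add: D_def)
qed

lemma omega1_order_countable_part:
  assumes tree: "order_tree T le" and C: "down_closed_chain T le C" and "\<not> countable C"
  shows "omega1_order {t\<in>C. countable (down T le t)} le"
proof -
  define D where "D = {t\<in>C. countable (down T le t)}"
  have chain: "chain_in T le C"
    using C by (simp add: down_closed_chain_def)
  have D_C: "D \<subseteq> C" and C_T: "C \<subseteq> T"
    using chain by (auto simp: D_def chain_in_def)
  show ?thesis
    unfolding D_def[symmetric]
  proof
    fix x y z
    assume "x \<in> D" "y \<in> D" "z \<in> D"
    then have "x \<in> T" "y \<in> T" "z \<in> T" "x \<in> C" "y \<in> C"
      using D_C C_T by auto
    show "le x y \<Longrightarrow> le y x \<Longrightarrow> x = y"
      using order_tree_antisym[OF tree \<open>x \<in> T\<close> \<open>y \<in> T\<close>] .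
    show "le x y \<Longrightarrow> le y z \<Longrightarrow> le x z"
      using order_tree_trans[OF tree \<open>x \<in> T\<close> \<open>y \<in> T\<close> \<open>z \<in> T\<close>] .
    show "le x y \<or> le y x"
      using chain \<open>x \<in> C\<close> \<open>y \<in> C\<close> by (simp add: chain_in_def)
  next
    show "\<exists>m\<in>S. \<forall>s\<in>S. le m s" if "S \<subseteq> D" "S \<noteq> {}" for S
      using chain_has_least[OF tree chain] that D_C by blast
    show "countable {s\<in>D. le s t}" if "t \<in> D" for t
    proof (rule countable_subset)
      show "{s\<in>D. le s t} \<subseteq> down T le t"
        using D_C C_T by (auto simp: down_def)
      show "countable (down T le t)"
        using that by (simp add: D_def)
    qed
    show "\<not> countable D"
      using uncountable_countable_part[OF assms] by (simp add: D_def)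
  qed
qed

section \<open>Bags of normal semi-partition trees\<close>

lemma countable_bag_if_slim:
  assumes "slim T le Vt" "t \<in> T" "countable (down T le t)"
  shows "countable (Vt t)"
proof -
  have "countable (sdown T le t)"
    using assms(3) by (rule countable_subset[rotated]) (auto simp: sdown_def down_def)
  then have "(card_of (sdown T le t <+> (UNIV :: nat set)), natLeq) \<in> ordLeq"
    using countable_card_le_natLeq countable_Plus[OF _ countableI_type] by blast
  moreover have "(card_of (Vt t), card_of (sdown T le t <+> (UNIV :: nat set))) \<in> ordLeq"
    using assms(1,2) by (simp add: slim_def)
  ultimately show ?thesis
    using countable_card_le_natLeq ordLeq_transitive by blast
qed

lemma normal_semi_partition_treeD:
  assumes "normal_semi_partition_tree V E T le Vt"
  shows normal_semi_partition_tree_order_tree: "order_tree T le"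
    and normal_semi_partition_tree_bag_nonempty: "t \<in> T \<Longrightarrow> Vt t \<noteq> {}"
    and normal_semi_partition_tree_bag_subset: "t \<in> T \<Longrightarrow> Vt t \<subseteq> V"
    and normal_semi_partition_tree_bags_disjoint: "t \<in> T \<Longrightarrow> t' \<in> T \<Longrightarrow> t \<noteq> t' \<Longrightarrow> Vt t \<inter> Vt t' = {}"
    and normal_semi_partition_tree_bag_connected: "t \<in> T \<Longrightarrow> connected_set E (Vt t)"
    and normal_semi_partition_tree_T_graph:
      "T_graph T le (\<lambda>t t'. t \<in> T \<and> t' \<in> T \<and> t \<noteq> t' \<and> (\<exists>x\<in>Vt t. \<exists>y\<in>Vt t'. E x y))"
  using assms unfolding normal_semi_partition_tree_def by (elim conjE; blast)+

lemma normal_semi_partition_tree_lower_neighbours_cofinal: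
  assumes "normal_semi_partition_tree V E T le Vt" "s \<in> T" "t \<in> T" "le s t" "s \<noteq> t"
  shows "\<exists>s'\<in>T. le s s' \<and> le s' t \<and> s' \<noteq> t \<and> (\<exists>x\<in>Vt s'. \<exists>y\<in>Vt t. E x y)"
proof -
  note normal_semi_partition_tree_T_graph[OF assms(1)]
  moreover have "s \<in> sdown T le t"
    using assms(2-5) by (simp add: sdown_def)
  ultimately show ?thesis
    using assms(3) unfolding T_graph_def sdown_def by blast
qed

lemma normal_semi_partition_tree_inj_on_bags:
  assumes "normal_semi_partition_tree V E T le Vt"
  shows "inj_on Vt T"
proof (rule inj_onI, rule ccontr)
  fix s t
  assume "s \<in> T" "t \<in> T" "Vt s = Vt t" "s \<noteq> t"
  then have "Vt s \<inter> Vt t = {}"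
    using normal_semi_partition_tree_bags_disjoint[OF assms] by blast
  then show False
    using normal_semi_partition_tree_bag_nonempty[OF assms \<open>s \<in> T\<close>] \<open>Vt s = Vt t\<close> by auto
qed

definition contraction_graph :: "('v \<Rightarrow> 'v \<Rightarrow> bool) \<Rightarrow> 'v set set \<Rightarrow> 'v set \<Rightarrow> 'v set \<Rightarrow> bool" where
  "contraction_graph E B X Y \<longleftrightarrow> X \<in> B \<and> Y \<in> B \<and> X \<noteq> Y \<and> (\<exists>x\<in>X. \<exists>y\<in>Y. E x y)"

lemma rooted_countable_minor_bags:
  assumes "graph V E" and npst: "normal_semi_partition_tree V E T le Vt"
    and "U_rooted_tree U T Vt" "D \<subseteq> T" "\<forall>t\<in>D. countable (Vt t)"
  shows "rooted_countable_minor V E U (Vt ` D) (contraction_graph E (Vt ` D))"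
  unfolding rooted_countable_minor_def
proof (intro conjI)
  show "graph (Vt ` D) (contraction_graph E (Vt ` D))"
    using \<open>graph V E\<close> by (auto simp: graph_def contraction_graph_def)
  show "\<forall>X\<in>Vt ` D. X \<subseteq> V \<and> connected_set E X \<and> countable X \<and> X \<inter> U \<noteq> {}"
    using assms(3-5) normal_semi_partition_tree_bag_subset[OF npst]
      normal_semi_partition_tree_bag_connected[OF npst] by (auto simp: U_rooted_tree_def subset_iff)
  show "\<forall>X\<in>Vt ` D. \<forall>Y\<in>Vt ` D. X \<noteq> Y \<longrightarrow> X \<inter> Y = {}"
    using normal_semi_partition_tree_bags_disjoint[OF npst] \<open>D \<subseteq> T\<close> by blast
  show "\<forall>X Y. contraction_graph E (Vt ` D) X Y \<longrightarrow> (\<exists>x\<in>X. \<exists>y\<in>Y. E x y)"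
    by (simp add: contraction_graph_def)
qed

lemma countable_colouring_number_inj_image:
  assumes "countable_colouring_number (f ` D) F" "inj_on f D"
  obtains Q where "\<And>s t. s \<in> D \<Longrightarrow> t \<in> D \<Longrightarrow> s \<noteq> t \<Longrightarrow> Q s t \<or> Q t s"
    and "\<And>t. t \<in> D \<Longrightarrow> finite {s\<in>D. Q s t \<and> s \<noteq> t \<and> F (f t) (f s)}"
proof -
  obtain r where r: "well_order_on (f ` D) r"
    and finite_earlier: "\<forall>x\<in>f ` D. finite {y. (y, x) \<in> r \<and> y \<noteq> x \<and> F x y}"
    using assms(1) unfolding countable_colouring_number_def by blast
  define Q where "Q s t \<longleftrightarrow> (f s, f t) \<in> r" for s t
  show thesis
  proof (rule that[of Q])
    show "Q s t \<or> Q t s" if "s \<in> D" "t \<in> D" "s \<noteq> t" for s t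
      using r that inj_onD[OF assms(2)]
      unfolding Q_def well_order_on_def linear_order_on_def total_on_def by blast
    show "finite {s\<in>D. Q s t \<and> s \<noteq> t \<and> F (f t) (f s)}" if "t \<in> D" for t
    proof (rule finite_subset)
      show "{s\<in>D. Q s t \<and> s \<noteq> t \<and> F (f t) (f s)} \<subseteq> f -` {y. (y, f t) \<in> r \<and> y \<noteq> f t \<and> F (f t) y} \<inter> D"
        using inj_onD[OF assms(2) _ _ that] by (auto simp: Q_def)
      show "finite (f -` {y. (y, f t) \<in> r \<and> y \<noteq> f t \<and> F (f t) y} \<inter> D)"
        using finite_earlier that by (intro finite_vimage_IntI assms(2)) auto
    qed
  qed
qed

lemma bag_order_with_finitely_many_earlier_neighbours:
  assumes minor: "\<forall>B F. rooted_countable_minor V E U B F \<longrightarrow> countable_colouring_number B F"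
    and "graph V E" and npst: "normal_semi_partition_tree V E T le Vt"
    and "U_rooted_tree U T Vt" "D \<subseteq> T" "\<forall>t\<in>D. countable (Vt t)"
  obtains Q where "\<And>s t. s \<in> D \<Longrightarrow> t \<in> D \<Longrightarrow> s \<noteq> t \<Longrightarrow> Q s t \<or> Q t s"
    and "\<And>t. t \<in> D \<Longrightarrow> finite {s\<in>D. Q s t \<and> s \<noteq> t \<and> (\<exists>x\<in>Vt t. \<exists>y\<in>Vt s. E x y)}"
proof -
  have inj: "inj_on Vt D"
    using normal_semi_partition_tree_inj_on_bags[OF npst] \<open>D \<subseteq> T\<close> by (rule inj_on_subset)
  have "countable_colouring_number (Vt ` D) (contraction_graph E (Vt ` D))"
    using minor rooted_countable_minor_bags[OF assms(2-)] by blast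
  then obtain Q where Q_total: "\<And>s t. s \<in> D \<Longrightarrow> t \<in> D \<Longrightarrow> s \<noteq> t \<Longrightarrow> Q s t \<or> Q t s"
    and Q_finite: "\<And>t. t \<in> D \<Longrightarrow>
      finite {s\<in>D. Q s t \<and> s \<noteq> t \<and> contraction_graph E (Vt ` D) (Vt t) (Vt s)}"
    using countable_colouring_number_inj_image[OF _ inj] by blast
  show thesis
  proof (rule that[OF Q_total])
    show "finite {s\<in>D. Q s t \<and> s \<noteq> t \<and> (\<exists>x\<in>Vt t. \<exists>y\<in>Vt s. E x y)}" if "t \<in> D" for t
    proof (rule finite_subset[OF _ Q_finite[OF that]])
      show "{s\<in>D. Q s t \<and> s \<noteq> t \<and> (\<exists>x\<in>Vt t. \<exists>y\<in>Vt s. E x y)}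
          \<subseteq> {s\<in>D. Q s t \<and> s \<noteq> t \<and> contraction_graph E (Vt ` D) (Vt t) (Vt s)}"
        using inj_onD[OF inj _ _ that] that by (auto simp: contraction_graph_def)
    qed
  qed
qed

lemma countable_down_closed_chain:
  assumes "connected_graph V E"
    and minor: "\<forall>B F. rooted_countable_minor V E U B F \<longrightarrow> countable_colouring_number B F"
    and npst: "normal_semi_partition_tree V E T le Vt"
    and "slim T le Vt" "U_rooted_tree U T Vt" and C: "down_closed_chain T le C"
  shows "countable C"
proof (rule ccontr)
  assume "\<not> countable C"
  note tree = normal_semi_partition_tree_order_tree[OF npst]
  define D where "D = {t\<in>C. countable (down T le t)}"
  interpret omega1_order D le
    using omega1_order_countable_part[OF tree C \<open>\<not> countable C\<close>] by (simp add: D_def)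
  have D_T: "D \<subseteq> T"
    using C by (auto simp: D_def down_closed_chain_def chain_in_def)
  have "graph V E"
    using \<open>connected_graph V E\<close> by (simp add: connected_graph_def)
  moreover have "\<forall>t\<in>D. countable (Vt t)"
    using countable_bag_if_slim[OF \<open>slim T le Vt\<close>] D_T by (auto simp: D_def)
  ultimately obtain Q where "\<And>s t. s \<in> D \<Longrightarrow> t \<in> D \<Longrightarrow> s \<noteq> t \<Longrightarrow> Q s t \<or> Q t s"
    and "\<And>t. t \<in> D \<Longrightarrow> finite {s\<in>D. Q s t \<and> s \<noteq> t \<and> (\<exists>x\<in>Vt t. \<exists>y\<in>Vt s. E x y)}"
    using bag_order_with_finitely_many_earlier_neighbours[OF minor _ npst \<open>U_rooted_tree U T Vt\<close> D_T]
    by blast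
  then show False
  proof (rule no_total_order_with_finitely_many_earlier_neighbours[rotated 2])
    show "\<exists>s'\<in>D. le s s' \<and> le s' t \<and> s' \<noteq> t \<and> (\<exists>x\<in>Vt s'. \<exists>y\<in>Vt t. E x y)"
      if st: "s \<in> D" "t \<in> D" "le s t" "s \<noteq> t" for s t
    proof -
      obtain s' where s': "s' \<in> T" "le s s'" "le s' t" "s' \<noteq> t" "\<exists>x\<in>Vt s'. \<exists>y\<in>Vt t. E x y"
        using normal_semi_partition_tree_lower_neighbours_cofinal[OF npst _ _ st(3,4)] st D_T
        by blast
      moreover have "s' \<in> D"
        using down_closed_countable_part[OF tree C _ _ s'(1,3)] st(2) by (simp add: D_def)
      ultimately show ?thesis
        by blast
    qed
    show "\<exists>x\<in>Vt t. \<exists>y\<in>Vt s. E x y" if "\<exists>x\<in>Vt s. \<exists>y\<in>Vt t. E x y" for s t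
      using that \<open>graph V E\<close> by (auto simp: graph_def)
  qed
qed

theorem lemma5p2:
  fixes V :: "'v set" and E :: "'v \<Rightarrow> 'v \<Rightarrow> bool" and U :: "'v set"
    and T :: "'t set" and le :: "'t \<Rightarrow> 't \<Rightarrow> bool" and Vt :: "'t \<Rightarrow> 'v set"
  assumes "connected_graph V E"
    and "U \<subseteq> V"
    and "\<forall>B F. rooted_countable_minor V E U B F \<longrightarrow> countable_colouring_number B F"
    and "normal_semi_partition_tree V E T le Vt"
    and "slim T le Vt"
    and "U_rooted_tree U T Vt"
  shows "(\<forall>C. branch T le C \<longrightarrow> countable C) \<and> (\<forall>t\<in>T. countable (Vt t))"
proof -
  note tree = normal_semi_partition_tree_order_tree[OF assms(4)]
  have chain_countable: "countable C" if "down_closed_chain T le C" for C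
    using countable_down_closed_chain[OF assms(1,3-6) that] .
  have "countable C" if "branch T le C" for C
    using chain_countable branch_down_closed_chain[OF tree that] by blast
  moreover have "countable (Vt t)" if "t \<in> T" for t
    using countable_bag_if_slim[OF assms(5) that] chain_countable down_closed_chain_down[OF tree that]
    by blast
  ultimately show ?thesis
    by blast
qed

end
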